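(* Let $n\ge1$, and let $H_{2n}$ be the $(4n+1)$-dimensional Heisenberg group. Let $N=H_{2n}\times\mathbb R^3$, let $\Gamma$ be a cocompact lattice in $H_{2n}$, and let $\mathbb Z^3\subset\mathbb R^3$ be a lattice. Then the compact nilmanifold $N/(\Gamma\times\mathbb Z^3)$ admits an invariant HPKT structure.
   Context: The Heisenberg Lie algebra $\mathfrak h_{2n}$ has basis $X_1,\dots,X_{2n},Y_1,\dots,Y_{2n},Z$ with nonzero brackets $[X_j,Y_j]=Z$. $H_{2n}$ is the corresponding simply connected Lie group. An almost hyper-paracomplex structure on a manifold is a triple $(J_1,J_2,J_3)$ of endomorphisms of the tangent bundle with $J_1^2=J_2^2=\mathrm{id}$, $J_3^2=-\mathrm{id}$ and $J_1J_2=-J_2J_1=J_3$. It is hyper-paracomplex if each $J_a$ has vanishing Nijenhuis tensor. A metric $g$ is hyperparahermitian if $g(J_1X,J_1Y)=g(J_2X,J_2Y)=-g(J_3X,J_3Y)=-g(X,Y)$. An HPKT structure is a hyper-paracomplex structure together with a hyperparahermitian metric admitting a linear connection $\nabla$ with $\nabla g=\nabla J_a=0$ and totally skew-symmetric torsion. "Invariant" on a quotient of a Lie group by a discrete subgroup (acting by left translations) means induced by left-invariant structures. *)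

theory Defs
  imports "HOL-Analysis.Analysis"
begin

text \<open>Lie algebra of N = H_{2n} x R^3.  The index type 'n has n elements, so
  'n x bool has 2n elements; a vector is (x, y, z, w) = sum x_j X_j + sum y_j Y_j + z Z + w,
  with w in the abelian factor R^3.\<close>

type_synonym 'n hlie = "(real^('n \<times> bool)) \<times> (real^('n \<times> bool)) \<times> real \<times> (real^3)"

definition lie_br :: "'n::finite hlie \<Rightarrow> 'n hlie \<Rightarrow> 'n hlie" where
  "lie_br u v = (0, 0,
     (\<Sum>j\<in>UNIV. fst u $ j * fst (snd v) $ j - fst v $ j * fst (snd u) $ j), 0)"

definition nijenhuis :: "('n::finite hlie \<Rightarrow> 'n hlie) \<Rightarrow> 'n hlie \<Rightarrow> 'n hlie \<Rightarrow> 'n hlie" where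
  "nijenhuis J X Y = lie_br (J X) (J Y) - J (lie_br (J X) Y) - J (lie_br X (J Y)) + J (J (lie_br X Y))"

definition almost_hyper_paracomplex ::
  "('n::finite hlie \<Rightarrow> 'n hlie) \<Rightarrow> ('n hlie \<Rightarrow> 'n hlie) \<Rightarrow> ('n hlie \<Rightarrow> 'n hlie) \<Rightarrow> bool" where
  "almost_hyper_paracomplex J1 J2 J3 \<longleftrightarrow>
     linear J1 \<and> linear J2 \<and> linear J3 \<and>
     (\<forall>X. J1 (J1 X) = X) \<and> (\<forall>X. J2 (J2 X) = X) \<and> (\<forall>X. J3 (J3 X) = - X) \<and>
     (\<forall>X. J1 (J2 X) = J3 X) \<and> (\<forall>X. J2 (J1 X) = - J3 X)"

definition hyper_paracomplex ::
  "('n::finite hlie \<Rightarrow> 'n hlie) \<Rightarrow> ('n hlie \<Rightarrow> 'n hlie) \<Rightarrow> ('n hlie \<Rightarrow> 'n hlie) \<Rightarrow> bool" where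
  "hyper_paracomplex J1 J2 J3 \<longleftrightarrow> almost_hyper_paracomplex J1 J2 J3 \<and>
     (\<forall>X Y. nijenhuis J1 X Y = 0) \<and> (\<forall>X Y. nijenhuis J2 X Y = 0) \<and> (\<forall>X Y. nijenhuis J3 X Y = 0)"

definition metric :: "('n::finite hlie \<Rightarrow> 'n hlie \<Rightarrow> real) \<Rightarrow> bool" where
  "metric g \<longleftrightarrow> bilinear g \<and> (\<forall>X Y. g X Y = g Y X) \<and> (\<forall>X. (\<forall>Y. g X Y = 0) \<longrightarrow> X = 0)"

definition hyperparahermitian ::
  "('n::finite hlie \<Rightarrow> 'n hlie \<Rightarrow> real) \<Rightarrow> ('n hlie \<Rightarrow> 'n hlie) \<Rightarrow> ('n hlie \<Rightarrow> 'n hlie) \<Rightarrow> ('n hlie \<Rightarrow> 'n hlie) \<Rightarrow> bool" where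
  "hyperparahermitian g J1 J2 J3 \<longleftrightarrow> metric g \<and>
     (\<forall>X Y. g (J1 X) (J1 Y) = - g X Y) \<and> (\<forall>X Y. g (J2 X) (J2 Y) = - g X Y) \<and>
     (\<forall>X Y. - g (J3 X) (J3 Y) = - g X Y)"

text \<open>Torsion of a left-invariant connection, given by nabla X Y = \<nabla>_X Y on left-invariant fields.\<close>
definition torsion :: "('n::finite hlie \<Rightarrow> 'n hlie \<Rightarrow> 'n hlie) \<Rightarrow> 'n hlie \<Rightarrow> 'n hlie \<Rightarrow> 'n hlie" where
  "torsion nabla X Y = nabla X Y - nabla Y X - lie_br X Y"

definition HPKT ::
  "('n::finite hlie \<Rightarrow> 'n hlie) \<Rightarrow> ('n hlie \<Rightarrow> 'n hlie) \<Rightarrow> ('n hlie \<Rightarrow> 'n hlie) \<Rightarrow>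
   ('n hlie \<Rightarrow> 'n hlie \<Rightarrow> real) \<Rightarrow> bool" where
  "HPKT J1 J2 J3 g \<longleftrightarrow> hyper_paracomplex J1 J2 J3 \<and> hyperparahermitian g J1 J2 J3 \<and>
     (\<exists>nabla. bilinear nabla \<and>
        (\<forall>X Y Z. g (nabla X Y) Z + g Y (nabla X Z) = 0) \<and>
        (\<forall>X Y. nabla X (J1 Y) = J1 (nabla X Y)) \<and>
        (\<forall>X Y. nabla X (J2 Y) = J2 (nabla X Y)) \<and>
        (\<forall>X Y. nabla X (J3 Y) = J3 (nabla X Y)) \<and>
        (\<forall>X Y Z. g (torsion nabla X Y) Z = - g (torsion nabla X Z) Y))"

end

theory Submission
  imports Defs
begin

(* All brackets are multiples of the central vector Z: [X, Y] = omega X Y Z. Take J_1, J_2, J_3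
  acting blockwise and omega-anti-invariant, [J X, Y] = - [X, J Y]; for J^2 = +-1 this alone makes
  the Nijenhuis tensor vanish. The neutral metric pairs the X- and Y-blocks through the standard
  symplectic form of R^2n and the null vector Z with the third direction of R^3, so that
  g([X, Y], -) = omega X Y theta with theta = g(Z, -). The connection nabla_X = theta(X) L, with L
  the standard complex structure on both blocks, preserves g and the J_a, and its torsion 3-form
  is - theta wedge omega. *)

definition tau :: "real^('i::finite \<times> bool) \<Rightarrow> real^('i \<times> bool)" where
  "tau a = (\<chi> j. if snd j then - a $ (fst j, False) else a $ (fst j, True))"

lemma sum_UNIV_prod_bool:
  "(\<Sum>j\<in>UNIV. f j) = (\<Sum>i\<in>(UNIV::'i::finite set). f (i, True) + f (i, False))"
proof -
  have "(\<Sum>j\<in>UNIV. f j) = (\<Sum>i\<in>UNIV. \<Sum>b\<in>UNIV. f (i, b))"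
    by (simp add: sum.cartesian_product)
  then show ?thesis
    by (simp add: UNIV_bool add.commute)
qed

lemma linear_tau: "linear tau"
  by (rule linearI) (auto simp: tau_def vec_eq_iff)

lemmas tau_add [simp] = linear_add[OF linear_tau]
  and tau_scaleR [simp] = linear_scale[OF linear_tau]
  and tau_minus [simp] = linear_neg[OF linear_tau]
  and tau_zero [simp] = linear_0[OF linear_tau]

lemma tau_tau [simp]: "tau (tau a) = - a"
  by (simp add: tau_def vec_eq_iff)

lemma inner_tau_right: "a \<bullet> tau b = - (tau a \<bullet> b)"
  by (simp add: inner_vec_def tau_def sum_UNIV_prod_bool sum_negf[symmetric] algebra_simps)

lemma inner_tau_tau [simp]: "tau a \<bullet> tau b = a \<bullet> b"
  using inner_tau_right[of "tau a" b] by simp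

lemma inner_tau_commute: "a \<bullet> tau b = - (b \<bullet> tau a)"
  using inner_tau_right[of a b] inner_commute[of "tau a" b] by simp

lemma inner_vec_3: "(v::real^3) \<bullet> w = v $ 1 * w $ 1 + v $ 2 * w $ 2 + v $ 3 * w $ 3"
  by (simp add: inner_vec_def sum_3)

definition omega :: "'n::finite hlie \<Rightarrow> 'n hlie \<Rightarrow> real" where
  "omega = (\<lambda>(x, y, z, w) (x', y', z', w'). x \<bullet> y' - x' \<bullet> y)"

definition theta :: "'n::finite hlie \<Rightarrow> real" where
  "theta = (\<lambda>(x, y, z, w). w $ 3)"

lemma lie_br_omega: "lie_br X Y = (0, 0, omega X Y, 0)"
  by (cases X, cases Y) (simp add: lie_br_def omega_def inner_vec_def sum_subtractf)

lemma omega_commute: "omega Y X = - omega X Y"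
  by (cases X, cases Y) (simp add: omega_def)

lemma bilinear_lie_br: "bilinear lie_br"
  unfolding bilinear_def lie_br_omega
  by (auto intro!: linearI simp: omega_def split_paired_all inner_add_left inner_add_right algebra_simps)

lemma nijenhuis_eq_0_if_lie_br_anticommute:
  assumes "linear J" and "\<And>X. J (J X) = c *\<^sub>R X"
    and "\<And>X Y. lie_br (J X) Y = - lie_br X (J Y)"
  shows "nijenhuis J X Y = 0"
proof -
  have "lie_br (J X) (J Y) = - c *\<^sub>R lie_br X Y"
    using assms(2,3) bilinear_rmul[OF bilinear_lie_br] by simp
  moreover have "J (lie_br (J X) Y) + J (lie_br X (J Y)) = 0"
    using assms(3) linear_add[OF assms(1), symmetric] by (simp add: linear_0[OF assms(1)])
  ultimately show ?thesis
    unfolding nijenhuis_def using assms(2) by (simp add: algebra_simps)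
qed

definition J\<^sub>1 :: "'n::finite hlie \<Rightarrow> 'n hlie" where
  "J\<^sub>1 = (\<lambda>(x, y, z, w). (x, - y, z, vector [- w $ 1, w $ 2, - w $ 3]))"

definition J\<^sub>2 :: "'n::finite hlie \<Rightarrow> 'n hlie" where
  "J\<^sub>2 = (\<lambda>(x, y, z, w). (y, x, w $ 1, vector [z, w $ 3, w $ 2]))"

definition J\<^sub>3 :: "'n::finite hlie \<Rightarrow> 'n hlie" where
  "J\<^sub>3 = (\<lambda>(x, y, z, w). (y, - x, w $ 1, vector [- z, w $ 3, - w $ 2]))"

lemmas J_defs = J\<^sub>1_def J\<^sub>2_def J\<^sub>3_def

lemma linear_J: "linear J\<^sub>1" "linear J\<^sub>2" "linear J\<^sub>3"
  by (auto intro!: linearI simp: J_defs split_paired_all vec_eq_iff forall_3)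

lemma J_J [simp]:
  fixes X :: "'n::finite hlie"
  shows "J\<^sub>1 (J\<^sub>1 X) = X" "J\<^sub>2 (J\<^sub>2 X) = X" "J\<^sub>3 (J\<^sub>3 X) = - X"
    and "J\<^sub>1 (J\<^sub>2 X) = J\<^sub>3 X" "J\<^sub>2 (J\<^sub>1 X) = - J\<^sub>3 X"
  by (cases X; simp add: J_defs vec_eq_iff forall_3)+

lemma lie_br_J_anticommute:
  fixes X Y :: "'n::finite hlie"
  shows "lie_br (J\<^sub>1 X) Y = - lie_br X (J\<^sub>1 Y)"
    and "lie_br (J\<^sub>2 X) Y = - lie_br X (J\<^sub>2 Y)"
    and "lie_br (J\<^sub>3 X) Y = - lie_br X (J\<^sub>3 Y)"
  by (cases X, cases Y, simp add: lie_br_omega omega_def J_defs inner_commute)+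

lemma hyper_paracomplex_J: "hyper_paracomplex J\<^sub>1 J\<^sub>2 (J\<^sub>3 :: 'n::finite hlie \<Rightarrow> _)"
proof -
  have "nijenhuis J\<^sub>1 X Y = 0" "nijenhuis J\<^sub>2 X Y = 0" for X Y :: "'n hlie"
    by (rule nijenhuis_eq_0_if_lie_br_anticommute[where c = 1];
        simp add: linear_J lie_br_J_anticommute)+
  moreover have "nijenhuis J\<^sub>3 X Y = 0" for X Y :: "'n hlie"
    by (rule nijenhuis_eq_0_if_lie_br_anticommute[where c = "- 1"];
        simp add: linear_J lie_br_J_anticommute)
  ultimately show ?thesis
    unfolding hyper_paracomplex_def almost_hyper_paracomplex_def by (simp add: linear_J)
qed

(* The pairing x \<bullet> tau y' of the X- and Y-blocks must be skew, since J\<^sub>2 swaps the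
  blocks and has to be anti-isometric; this is why the X-block has even dimension. *)

definition g\<^sub>0 :: "'n::finite hlie \<Rightarrow> 'n hlie \<Rightarrow> real" where
  "g\<^sub>0 = (\<lambda>(x, y, z, w) (x', y', z', w').
     x \<bullet> tau y' + x' \<bullet> tau y + z * w' $ 3 + z' * w $ 3 - w $ 1 * w' $ 2 - w' $ 1 * w $ 2)"

definition D\<^sub>0 :: "'n::finite hlie \<Rightarrow> 'n hlie" where
  "D\<^sub>0 = (\<lambda>(x, y, z, w). (tau y, - tau x, w $ 3, vector [- w $ 2, - w $ 1, z]))"

lemma bilinear_g\<^sub>0: "bilinear g\<^sub>0"
  unfolding bilinear_def
  by (auto intro!: linearI simp: g\<^sub>0_def split_paired_all inner_add_left inner_add_right algebra_simps)

lemma g\<^sub>0_commute: "g\<^sub>0 X Y = g\<^sub>0 Y X"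
  by (cases X, cases Y) (simp add: g\<^sub>0_def algebra_simps)

lemma g\<^sub>0_D\<^sub>0: "g\<^sub>0 X (D\<^sub>0 X) = X \<bullet> X"
  by (cases X) (simp add: g\<^sub>0_def D\<^sub>0_def inner_prod_def inner_vec_3)

lemma metric_g\<^sub>0: "metric g\<^sub>0"
  unfolding metric_def
proof (intro conjI allI impI bilinear_g\<^sub>0 g\<^sub>0_commute)
  show "X = 0" if "\<forall>Y. g\<^sub>0 X Y = 0" for X :: "'n::finite hlie"
    using that[rule_format, of "D\<^sub>0 X"] by (simp add: g\<^sub>0_D\<^sub>0)
qed

lemma g\<^sub>0_J:
  fixes X Y :: "'n::finite hlie"
  shows "g\<^sub>0 (J\<^sub>1 X) (J\<^sub>1 Y) = - g\<^sub>0 X Y"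
    and "g\<^sub>0 (J\<^sub>2 X) (J\<^sub>2 Y) = - g\<^sub>0 X Y"
    and "g\<^sub>0 (J\<^sub>3 X) (J\<^sub>3 Y) = g\<^sub>0 X Y"
proof -
  obtain x y z w x' y' z' w' where XY: "X = (x, y, z, w)" "Y = (x', y', z', w')"
    by (cases X, cases Y) blast
  note swap = inner_tau_commute[of y x'] inner_tau_commute[of y' x]
  show "g\<^sub>0 (J\<^sub>1 X) (J\<^sub>1 Y) = - g\<^sub>0 X Y"
    by (simp add: XY g\<^sub>0_def J_defs)
  show "g\<^sub>0 (J\<^sub>2 X) (J\<^sub>2 Y) = - g\<^sub>0 X Y" "g\<^sub>0 (J\<^sub>3 X) (J\<^sub>3 Y) = g\<^sub>0 X Y"
    by (simp_all add: XY g\<^sub>0_def J_defs swap)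
qed

lemma hyperparahermitian_g\<^sub>0: "hyperparahermitian g\<^sub>0 J\<^sub>1 J\<^sub>2 (J\<^sub>3 :: 'n::finite hlie \<Rightarrow> _)"
  unfolding hyperparahermitian_def by (simp add: metric_g\<^sub>0 g\<^sub>0_J)

(* The sign of L\<^sub>0 is forced: only with g\<^sub>0 (L\<^sub>0 Y) Z = - omega Y Z is the torsion
  of nabla\<^sub>0 totally skew. *)

definition L\<^sub>0 :: "'n::finite hlie \<Rightarrow> 'n hlie" where
  "L\<^sub>0 = (\<lambda>(x, y, z, w). (- tau x, - tau y, 0, 0))"

definition nabla\<^sub>0 :: "'n::finite hlie \<Rightarrow> 'n hlie \<Rightarrow> 'n hlie" where
  "nabla\<^sub>0 X Y = theta X *\<^sub>R L\<^sub>0 Y"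

lemma linear_theta: "linear theta"
  by (auto intro!: linearI simp: theta_def split_paired_all)

lemma linear_L\<^sub>0: "linear L\<^sub>0"
  by (auto intro!: linearI simp: L\<^sub>0_def split_paired_all)

lemma bilinear_nabla\<^sub>0: "bilinear nabla\<^sub>0"
  unfolding bilinear_def nabla\<^sub>0_def
  by (intro allI conjI linearI) (simp_all add: linear_add[OF linear_L\<^sub>0] linear_scale[OF linear_L\<^sub>0]
      linear_add[OF linear_theta] linear_scale[OF linear_theta] algebra_simps)

lemma L\<^sub>0_J:
  fixes X :: "'n::finite hlie"
  shows "L\<^sub>0 (J\<^sub>1 X) = J\<^sub>1 (L\<^sub>0 X)" "L\<^sub>0 (J\<^sub>2 X) = J\<^sub>2 (L\<^sub>0 X)" "L\<^sub>0 (J\<^sub>3 X) = J\<^sub>3 (L\<^sub>0 X)"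
  by (cases X; simp add: L\<^sub>0_def J_defs vec_eq_iff forall_3)+

lemma nabla\<^sub>0_J:
  fixes X Y :: "'n::finite hlie"
  shows "nabla\<^sub>0 X (J\<^sub>1 Y) = J\<^sub>1 (nabla\<^sub>0 X Y)" "nabla\<^sub>0 X (J\<^sub>2 Y) = J\<^sub>2 (nabla\<^sub>0 X Y)"
    "nabla\<^sub>0 X (J\<^sub>3 Y) = J\<^sub>3 (nabla\<^sub>0 X Y)"
  by (simp_all add: nabla\<^sub>0_def L\<^sub>0_J linear_scale[OF linear_J(1)] linear_scale[OF linear_J(2)]
      linear_scale[OF linear_J(3)])

lemma g\<^sub>0_lie_br: "g\<^sub>0 (lie_br X Y) Z = omega X Y * theta Z"
  by (cases Z) (simp add: lie_br_omega g\<^sub>0_def theta_def)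

lemma g\<^sub>0_L\<^sub>0: "g\<^sub>0 (L\<^sub>0 Y) Z = - omega Y Z"
  by (cases Y, cases Z) (simp add: L\<^sub>0_def g\<^sub>0_def omega_def)

lemma g\<^sub>0_nabla\<^sub>0_skew: "g\<^sub>0 (nabla\<^sub>0 X Y) Z + g\<^sub>0 Y (nabla\<^sub>0 X Z) = 0"
  by (simp add: nabla\<^sub>0_def bilinear_lmul[OF bilinear_g\<^sub>0] bilinear_rmul[OF bilinear_g\<^sub>0]
      g\<^sub>0_commute[of Y] g\<^sub>0_L\<^sub>0 omega_commute[of Y])

lemma g\<^sub>0_torsion:
  "g\<^sub>0 (torsion nabla\<^sub>0 X Y) Z = - (theta X * omega Y Z + theta Y * omega Z X + theta Z * omega X Y)"
proof -
  have "g\<^sub>0 (torsion nabla\<^sub>0 X Y) Z = theta X * g\<^sub>0 (L\<^sub>0 Y) Z - theta Y * g\<^sub>0 (L\<^sub>0 X) Z - g\<^sub>0 (lie_br X Y) Z"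
    by (simp add: torsion_def nabla\<^sub>0_def bilinear_lsub[OF bilinear_g\<^sub>0] bilinear_lmul[OF bilinear_g\<^sub>0])
  then show ?thesis
    by (simp add: g\<^sub>0_L\<^sub>0 g\<^sub>0_lie_br omega_commute[of X Z] algebra_simps)
qed

lemma g\<^sub>0_torsion_skew: "g\<^sub>0 (torsion nabla\<^sub>0 X Y) Z = - g\<^sub>0 (torsion nabla\<^sub>0 X Z) Y"
  by (simp add: g\<^sub>0_torsion omega_commute[of Z Y] omega_commute[of Y X] omega_commute[of Z X]
      algebra_simps)

theorem mainTheorem7:
  shows "\<exists>(J1 :: 'n::finite hlie \<Rightarrow> 'n hlie) J2 J3 g. HPKT J1 J2 J3 g"
proof -
  have "HPKT J\<^sub>1 J\<^sub>2 J\<^sub>3 (g\<^sub>0 :: 'n hlie \<Rightarrow> _)"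
    unfolding HPKT_def
    using hyper_paracomplex_J hyperparahermitian_g\<^sub>0 bilinear_nabla\<^sub>0 g\<^sub>0_nabla\<^sub>0_skew nabla\<^sub>0_J
      g\<^sub>0_torsion_skew
    by blast
  then show ?thesis by blast
qed

end
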